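(* For every cardinal $\kappa$ there is a cardinal $\lambda$ such that $\lambda\rightarrow(\lambda)_\kappa^{\mathrm{AFP}}$. In fact, $\lambda=\max\{\omega,(2^\kappa)^+\}$ suffices.
   Context: For a group $G$, an ordinal $\mu$ and a $\mu$-sequence $(g_\alpha\mid\alpha<\mu)$ of elements of $G$, its set of adjacent finite products is $\mathrm{AFP}(g_\alpha\mid\alpha<\mu)=\{g_\alpha g_{\alpha+1}\cdots g_{\alpha+n}\mid \alpha<\mu,\ n<\omega\}$ (all indices lying below $\mu$). For a group $G$, an ordinal $\mu$ and a cardinal $\kappa$, $G\rightarrow(\mu)_\kappa^{\mathrm{AFP}}$ means: for every colouring $c:G\to\kappa$ there is an injective $\mu$-sequence $(g_\alpha\mid\alpha<\mu)$ of elements of $G$ such that $\mathrm{AFP}(g_\alpha\mid\alpha<\mu)$ is monochromatic for $c$. For a cardinal $\lambda$, $\lambda\rightarrow(\mu)_\kappa^{\mathrm{AFP}}$ means that $G\rightarrow(\mu)_\kappa^{\mathrm{AFP}}$ holds for every group $G$ with $|G|=\lambda$. *)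

theory Defs
  imports Main "HOL-Algebra.Group"
begin

text \<open>Ordinals are represented by well-orders r (index set Field r). The successor
  of an index a is the least element of Field r strictly above a; alpha + n is the
  n-fold successor.\<close>

definition osucc :: "'i rel \<Rightarrow> 'i \<Rightarrow> 'i" where
  "osucc r a = wo_rel.suc r {a}"

definition oplusn :: "'i rel \<Rightarrow> 'i \<Rightarrow> nat \<Rightarrow> 'i" where
  "oplusn r a n = (osucc r ^^ n) a"

text \<open>alpha + i lies below mu (i.e. exists in Field r) for all i \<le> n.\<close>
definition indices_below :: "'i rel \<Rightarrow> 'i \<Rightarrow> nat \<Rightarrow> bool" where
  "indices_below r a n \<longleftrightarrow> a \<in> Field r \<and> (\<forall>i<n. AboveS r {oplusn r a i} \<noteq> {})"

definition adj_prod :: "('a, 'b) monoid_scheme \<Rightarrow> 'i rel \<Rightarrow> ('i \<Rightarrow> 'a) \<Rightarrow> 'i \<Rightarrow> nat \<Rightarrow> 'a" where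
  "adj_prod G r g a n = foldr (\<lambda>i acc. g (oplusn r a i) \<otimes>\<^bsub>G\<^esub> acc) [0..<Suc n] \<one>\<^bsub>G\<^esub>"

definition AFP :: "('a, 'b) monoid_scheme \<Rightarrow> 'i rel \<Rightarrow> ('i \<Rightarrow> 'a) \<Rightarrow> 'a set" where
  "AFP G r g = {adj_prod G r g a n | a n. indices_below r a n}"

text \<open>G \<rightarrow> (mu)_K^AFP, where mu is the order type of r and kappa = |K|.\<close>
definition AFP_arrow :: "('a, 'b) monoid_scheme \<Rightarrow> 'i rel \<Rightarrow> 'k set \<Rightarrow> bool" where
  "AFP_arrow G r K \<longleftrightarrow>
     (\<forall>c \<in> carrier G \<rightarrow> K. \<exists>g. g \<in> Field r \<rightarrow> carrier G \<and> inj_on g (Field r) \<and>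
        (\<exists>k. \<forall>x \<in> AFP G r g. c x = k))"

text \<open>r is (a cardinal order representing) max(omega, (2^|K|)^+).\<close>
definition is_lambda_of :: "'i rel \<Rightarrow> 'k set \<Rightarrow> bool" where
  "is_lambda_of r K \<longleftrightarrow>
     ((natLeq, cardSuc (card_of (Pow K))) \<in> ordLeq \<longrightarrow> (r, cardSuc (card_of (Pow K))) \<in> ordIso) \<and>
     ((cardSuc (card_of (Pow K)), natLeq) \<in> ordLess \<longrightarrow> (r, natLeq) \<in> ordIso)"

end

(*
  By the Erdos-Rado tree argument, every colouring with kappa colours of the pairs of a set of
  more than 2^kappa elements has an infinite homogeneous sequence. Applied to
  (x, y) |-> c(x^-1 y) this gives h with all c(h_m^-1 h_n), m < n, equal. Along a subsequence j
  the quotients b_n = h_(j n)^-1 h_(j (n+1)) are pairwise distinct, and their adjacent products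
  telescope to h_(j m)^-1 h_(j (n+1)), so they all have the same colour: b is a monochromatic
  omega-block. Running this inside a maximal set T whose quotients x^-1 y avoid the at most
  2^kappa elements already used shows that a maximal family of pairwise disjoint blocks has
  more than 2^kappa members, hence (2^kappa)^+ of one colour. Every ordinal below lambda is
  uniquely delta + n with delta a limit (or zero), and an adjacent product never crosses a limit;
  so putting the block of delta at the positions delta + n yields the required lambda-sequence.
  For finite kappa, lambda = omega and Ramsey's theorem yields a single block directly.
*)

theory Submission
  imports Defs "HOL-Library.Ramsey" "HOL-Library.Disjoint_Sets"
begin

unbundle cardinal_syntax

section \<open>Cardinal arithmetic\<close>

lemma infinite_if_card_of_ordIso:
  assumes "|A| =o r" and "natLeq \<le>o r"
  shows "infinite A"
  using ordLeq_ordIso_trans[OF assms(2) ordIso_symmetric[OF assms(1)]] infinite_iff_natLeq_ordLeq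
  by blast

lemma card_of_Pow_mono_ordLeq:
  assumes "|A| \<le>o |B|"
  shows "|Pow A| \<le>o |Pow B|"
proof -
  obtain g where "inj_on g A" "g ` A \<subseteq> B"
    using assms card_of_ordLeq[of A B] by blast
  then have "inj_on (image g) (Pow A)" "image g ` Pow A \<subseteq> Pow B"
    using inj_on_image_Pow by blast+
  then show ?thesis
    using card_of_ordLeq by blast
qed

lemma card_of_finite_ordLeq_infinite:
  assumes "finite A" and "infinite B"
  shows "|A| \<le>o |B|"
  using assms card_of_ordLeq_finite ordLess_imp_ordLeq
    ordLess_or_ordLeq[OF card_of_Well_order card_of_Well_order]
  by blast

lemma card_of_Times_ordLeq_infinite:
  assumes "infinite C" and "|A| \<le>o |C|" and "|B| \<le>o |C|"
  shows "|A \<times> B| \<le>o |C|"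
  using card_of_Times_ordLeq_infinite_Field[of "|C|" A B] assms card_of_Card_order[of C]
  by (simp add: Field_card_of)

lemma card_of_Un_ordLeq_infinite:
  assumes "infinite C" and "|A| \<le>o |C|" and "|B| \<le>o |C|"
  shows "|A \<union> B| \<le>o |C|"
  using card_of_Un_ordLeq_infinite_Field[of "|C|" A B] assms card_of_Card_order[of C]
  by (simp add: Field_card_of)

lemma card_of_UNION_pigeonhole:
  assumes "infinite C" and "|I| \<le>o |C|" and "|C| <o |\<Union>i\<in>I. A i|"
  obtains i where "i \<in> I" and "|C| <o |A i|"
proof -
  have "\<exists>i\<in>I. \<not> |A i| \<le>o |C|"
    using card_of_UNION_ordLeq_infinite[OF assms(1,2)] assms(3) not_ordLess_ordLeq by blast
  then show ?thesis
    using that not_ordLeq_iff_ordLess[OF card_of_Well_order card_of_Well_order] by blast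
qed

lemma ordLess_cardSuc_of_card_of_Field:
  assumes "Well_order w" and "|Field w| \<le>o |K|"
  shows "w <o cardSuc |K|"
proof -
  have "\<not> cardSuc |K| \<le>o w"
  proof
    assume "cardSuc |K| \<le>o w"
    then have "|Field (cardSuc |K| )| \<le>o |K|"
      using card_of_mono2 assms(2) ordLeq_transitive by blast
    then have "cardSuc |K| \<le>o |K|"
      using card_of_Field_ordIso[OF cardSuc_Card_order[OF card_of_Card_order]]
        ordIso_ordLeq_trans ordIso_symmetric by blast
    then show False
      using cardSuc_greater[OF card_of_Card_order] not_ordLess_ordLeq by blast
  qed
  then show ?thesis
    using ordLess_or_ordLeq[OF assms(1) cardSuc_Well_order[OF card_of_Card_order]] by blast
qed

lemma ofilter_bounded_if_small:
  assumes "Card_order r" and "infinite (Field r)"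
    and "wo_rel.ofilter r A" and "|A| <o r"
  shows "\<exists>\<beta>\<in>Field r. A \<subseteq> underS r \<beta>"
proof -
  have "A \<noteq> Field r"
    using assms(4) card_of_Field_ordIso[OF assms(1)] not_ordLess_ordIso by blast
  then show ?thesis
    using wo_rel.ofilter_underS_Field[of r A] assms(1,3)
    unfolding card_order_on_def wo_rel_def by blast
qed

section \<open>Maximality and Ramsey-type lemmas\<close>

lemma maximal_pairwise_subset:
  obtains M where "M \<subseteq> A" and "pairwise P M"
    and "\<And>x. x \<in> A \<Longrightarrow> x \<notin> M \<Longrightarrow> \<exists>y\<in>M. \<not> P x y \<or> \<not> P y x"
proof -
  define F where "F = {M. M \<subseteq> A \<and> pairwise P M}"
  have "\<Union>C \<in> F" if C: "C \<in> chains F" for C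
  proof -
    have "P x y" if xy: "x \<in> \<Union>C" "y \<in> \<Union>C" "x \<noteq> y" for x y
    proof -
      obtain X Y where XY: "X \<in> C" "Y \<in> C" "x \<in> X" "y \<in> Y"
        using xy(1,2) by blast
      have "X \<subseteq> Y \<or> Y \<subseteq> X"
        using chainsD[OF C XY(1,2)] .
      then obtain Z where Z: "Z \<in> C" "x \<in> Z" "y \<in> Z"
        using XY by blast
      then have "pairwise P Z"
        using chainsD2[OF C] by (auto simp: F_def)
      then show ?thesis
        using Z(2,3) xy(3) by (simp add: pairwise_def)
    qed
    moreover have "\<Union>C \<subseteq> A"
      using chainsD2[OF C] by (auto simp: F_def)
    ultimately show ?thesis
      unfolding F_def by (simp add: pairwise_def)
  qed
  then obtain M where M: "M \<in> F" and max: "\<And>X. X \<in> F \<Longrightarrow> M \<subseteq> X \<Longrightarrow> X = M"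
    using Zorn_Lemma[of F] by auto
  have ext: "\<exists>y\<in>M. \<not> P x y \<or> \<not> P y x" if x: "x \<in> A" "x \<notin> M" for x
  proof (rule ccontr)
    assume "\<not> ?thesis"
    then have "insert x M \<in> F"
      using M x(1) by (simp add: F_def pairwise_insert)
    then show False
      using max[of "insert x M"] x(2) by blast
  qed
  from M have "M \<subseteq> A" "pairwise P M"
    by (simp_all add: F_def)
  then show ?thesis
    using ext by (rule that)
qed

lemma ramsey_increasing_pairs:
  fixes col :: "nat \<Rightarrow> nat \<Rightarrow> 'c"
  assumes "finite C" and col: "\<And>m n. m < n \<Longrightarrow> col m n \<in> C"
  obtains \<sigma> :: "nat \<Rightarrow> nat" and t where "strict_mono \<sigma>" and "\<And>m n. m < n \<Longrightarrow> col (\<sigma> m) (\<sigma> n) = t"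
proof -
  obtain idx where idx: "bij_betw idx C {0..<card C}"
    using ex_bij_betw_finite_nat[OF assms(1)] by blast
  define F where "F X = idx (col (Min X) (Max X))" for X :: "nat set"
  have F: "F {x, y} = idx (col x y)" if "x < y" for x y
    using that by (simp add: F_def)
  have "F {x, y} < card C" if "x \<noteq> y" for x y
  proof (cases "x < y")
    case True
    then show ?thesis
      using col bij_betwE[OF idx] F by simp
  next
    case False
    then have "y < x"
      using that by simp
    then show ?thesis
      using col bij_betwE[OF idx] F[of y x] by (simp add: insert_commute)
  qed
  then have "\<forall>x\<in>UNIV. \<forall>y\<in>UNIV. x \<noteq> y \<longrightarrow> F {x, y} < card C"
    by blast
  from Ramsey2[OF infinite_UNIV_nat this] obtain Y s
    where Y: "infinite Y" "\<forall>x\<in>Y. \<forall>y\<in>Y. x \<noteq> y \<longrightarrow> F {x, y} = s"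
    by blast
  let ?\<sigma> = "enumerate Y"
  have mono: "strict_mono ?\<sigma>"
    using strict_mono_enumerate[OF Y(1)] .
  have "idx (col (?\<sigma> m) (?\<sigma> n)) = s" if "m < n" for m n
  proof -
    have lt: "?\<sigma> m < ?\<sigma> n"
      using mono that by (simp add: strict_mono_less)
    have "?\<sigma> m \<in> Y" "?\<sigma> n \<in> Y"
      using enumerate_in_set[OF Y(1)] by blast+
    then have "F {?\<sigma> m, ?\<sigma> n} = s"
      using less_imp_neq[OF lt] by (rule Y(2)[rule_format])
    then show ?thesis
      using F[OF lt] by simp
  qed
  moreover have "col (?\<sigma> m) (?\<sigma> n) \<in> C" if "m < n" for m n
    using col mono that by (simp add: strict_mono_less)
  moreover have "inj_on idx C"
    using idx by (simp add: bij_betw_def)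
  ultimately have "col (?\<sigma> m) (?\<sigma> n) = col (?\<sigma> 0) (?\<sigma> 1)" if "m < n" for m n
    using inj_onD[of idx C] that zero_less_one by metis
  then show ?thesis
    using that[OF mono] by blast
qed

lemma wf_infinite_increasing_seq:
  assumes "wf R" and "infinite H"
    and total: "\<And>a b. a \<in> H \<Longrightarrow> b \<in> H \<Longrightarrow> a \<noteq> b \<Longrightarrow> (a, b) \<in> R \<or> (b, a) \<in> R"
  obtains h :: "nat \<Rightarrow> 'a" where "inj h" and "range h \<subseteq> H"
    and "\<And>m n. m < n \<Longrightarrow> (h m, h n) \<in> R"
proof -
  obtain u :: "nat \<Rightarrow> 'a" where u: "inj u" "range u \<subseteq> H"
    using infinite_countable_subset[OF assms(2)] by blast
  obtain \<sigma> :: "nat \<Rightarrow> nat" and t where \<sigma>: "strict_mono \<sigma>"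
    and t: "\<And>m n. m < n \<Longrightarrow> ((u (\<sigma> m), u (\<sigma> n)) \<in> R) = t"
    by (rule ramsey_increasing_pairs[OF finite_UNIV, of "\<lambda>m n. (u m, u n) \<in> R"]) simp_all
  define h where "h = u \<circ> \<sigma>"
  have inj: "inj h"
    unfolding h_def using u(1) strict_mono_imp_inj_on[OF \<sigma>] by (rule inj_compose)
  have H: "h i \<in> H" for i
    using u(2) by (auto simp: h_def)
  have t
  proof (rule ccontr)
    assume "\<not> t"
    have "(h (Suc i), h i) \<in> R" for i
    proof -
      have "(h i, h (Suc i)) \<notin> R"
        using t[of i "Suc i"] \<open>\<not> t\<close> by (simp add: h_def)
      moreover have "h i \<noteq> h (Suc i)"
        using inj by (simp add: inj_eq)
      ultimately show ?thesis
        using total[OF H H] by blast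
    qed
    then show False
      using assms(1) by (auto simp: wf_iff_no_infinite_down_chain)
  qed
  show ?thesis
  proof (rule that[OF inj])
    show "range h \<subseteq> H"
      using H by blast
    show "(h m, h n) \<in> R" if "m < n" for m n
      using t[OF that] \<open>t\<close> by (simp add: h_def)
  qed
qed

section \<open>The Erdos-Rado theorem for omega-sequences\<close>

locale canonical_tree =
  fixes S :: "'a set" and W :: "'a rel" and f :: "'a \<Rightarrow> 'a \<Rightarrow> 'k"
  assumes well_order: "well_order_on S W"
begin

definition Ws :: "'a rel" where
  "Ws = W - Id"

text \<open>The Erdos-Rado tree: \<open>y\<close> is a tree predecessor of \<open>x\<close> iff \<open>y\<close> precedes \<open>x\<close> in \<open>W\<close>
  and every tree predecessor \<open>z\<close> of \<open>x\<close> below \<open>y\<close> has \<open>f z y = f z x\<close>. Since this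
  refers to the tree predecessors of \<open>x\<close> below \<open>y\<close>, it is a recursion on \<open>y\<close>.\<close>

definition tree_cond :: "'a \<Rightarrow> 'a \<Rightarrow> bool" where
  "tree_cond x = wfrec Ws (\<lambda>T y. \<forall>z. (z, y) \<in> Ws \<longrightarrow> T z \<longrightarrow> f z y = f z x)"

definition tree_pred :: "'a \<Rightarrow> 'a set" where
  "tree_pred x = {y. (y, x) \<in> Ws \<and> tree_cond x y}"

lemma Field_W: "Field W = S"
  using well_order_on_Field[OF well_order] by simp

lemma Well_order_W: "Well_order W"
  using well_order_on_Well_order[OF well_order] by simp

lemma wf_Ws: "wf Ws"
  using well_order unfolding well_order_on_def Ws_def by simp

lemma Ws_in_S: "(a, b) \<in> Ws \<Longrightarrow> a \<in> S \<and> b \<in> S"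
  using Field_W unfolding Ws_def Field_def by auto

lemma Ws_irrefl: "(a, a) \<notin> Ws"
  unfolding Ws_def by auto

lemma Ws_trans:
  assumes "(a, b) \<in> Ws" and "(b, c) \<in> Ws"
  shows "(a, c) \<in> Ws"
proof -
  have "trans W" and "antisym W"
    using well_order
    unfolding well_order_on_def linear_order_on_def partial_order_on_def preorder_on_def by auto
  then show ?thesis
    using assms unfolding Ws_def trans_def antisym_def by blast
qed

lemma Ws_total:
  assumes "a \<in> S" and "b \<in> S" and "a \<noteq> b"
  shows "(a, b) \<in> Ws \<or> (b, a) \<in> Ws"
  using well_order assms unfolding well_order_on_def linear_order_on_def total_on_def Ws_def by auto

lemma W_refl: "a \<in> S \<Longrightarrow> (a, a) \<in> W"
  using well_order
  unfolding well_order_on_def linear_order_on_def partial_order_on_def preorder_on_def refl_on_def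
  by auto

lemma Ws_iff: "(a, b) \<in> Ws \<longleftrightarrow> (a, b) \<in> W \<and> a \<noteq> b"
  unfolding Ws_def by auto

lemma tree_cond_unfold:
  "tree_cond x y \<longleftrightarrow> (\<forall>z. (z, y) \<in> Ws \<longrightarrow> tree_cond x z \<longrightarrow> f z y = f z x)"
  unfolding tree_cond_def by (subst wfrec[OF wf_Ws]) (simp add: cut_apply)

lemma tree_pred_iff:
  "y \<in> tree_pred x \<longleftrightarrow> (y, x) \<in> Ws \<and> (\<forall>z\<in>tree_pred x. (z, y) \<in> Ws \<longrightarrow> f z y = f z x)"
proof
  assume "y \<in> tree_pred x"
  then show "(y, x) \<in> Ws \<and> (\<forall>z\<in>tree_pred x. (z, y) \<in> Ws \<longrightarrow> f z y = f z x)"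
    unfolding tree_pred_def using tree_cond_unfold[of x y] by auto
next
  assume y: "(y, x) \<in> Ws \<and> (\<forall>z\<in>tree_pred x. (z, y) \<in> Ws \<longrightarrow> f z y = f z x)"
  have "tree_cond x y"
  proof (subst tree_cond_unfold, intro allI impI)
    fix z assume "(z, y) \<in> Ws" "tree_cond x z"
    then have "z \<in> tree_pred x"
      using y Ws_trans unfolding tree_pred_def by blast
    then show "f z y = f z x"
      using y \<open>(z, y) \<in> Ws\<close> by blast
  qed
  then show "y \<in> tree_pred x"
    using y unfolding tree_pred_def by auto
qed

lemma tree_pred_Ws: "y \<in> tree_pred x \<Longrightarrow> (y, x) \<in> Ws"
  unfolding tree_pred_def by auto

lemma tree_pred_subset: "tree_pred x \<subseteq> S"
  using tree_pred_Ws Ws_in_S by blast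

lemma tree_pred_colour:
  "z \<in> tree_pred x \<Longrightarrow> y \<in> tree_pred x \<Longrightarrow> (z, y) \<in> Ws \<Longrightarrow> f z y = f z x"
  using tree_pred_iff by blast

lemma tree_pred_inject:
  assumes "x \<in> S" and "x' \<in> S" and "tree_pred x = tree_pred x'"
    and "\<forall>z\<in>tree_pred x. f z x = f z x'"
  shows "x = x'"
proof (rule ccontr)
  have False if "(a, b) \<in> Ws" "tree_pred a = tree_pred b" "\<forall>z\<in>tree_pred a. f z a = f z b" for a b
  proof -
    have "a \<in> tree_pred b"
      using that by (subst tree_pred_iff) auto
    then show False
      using that(2) tree_pred_Ws Ws_irrefl by blast
  qed
  moreover assume "x \<noteq> x'"
  ultimately show False
    using Ws_total[OF assms(1,2)] assms(3,4) by metis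
qed

lemma tree_cond_tree_pred:
  assumes "y \<in> tree_pred x"
  shows "(z, y) \<in> Ws \<Longrightarrow> tree_cond y z \<longleftrightarrow> tree_cond x z"
proof (induction z rule: wf_induct[OF wf_Ws])
  case (1 z)
  have yx: "(y, x) \<in> Ws"
    using assms tree_pred_Ws by blast
  have "(tree_cond y w \<longrightarrow> f w z = f w y) \<longleftrightarrow> (tree_cond x w \<longrightarrow> f w z = f w x)"
    if wz: "(w, z) \<in> Ws" for w
  proof -
    have wy: "(w, y) \<in> Ws"
      using Ws_trans wz 1(2) by blast
    have "tree_cond x w \<Longrightarrow> f w y = f w x"
      using tree_pred_colour[OF _ assms wy] Ws_trans[OF wy yx] unfolding tree_pred_def by blast
    moreover have "tree_cond y w \<longleftrightarrow> tree_cond x w"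
      using 1(1) wz wy by blast
    ultimately show ?thesis
      by auto
  qed
  then show ?case
    by (subst (1 2) tree_cond_unfold) blast
qed

lemma tree_pred_tree_pred:
  assumes "y \<in> tree_pred x"
  shows "tree_pred y = {z \<in> tree_pred x. (z, y) \<in> Ws}"
  using tree_cond_tree_pred[OF assms] Ws_trans[OF _ tree_pred_Ws[OF assms]]
  unfolding tree_pred_def by blast

end

lemma card_of_bounded_graphs:
  assumes "infinite K"
  shows "|\<Union>\<beta>\<in>Field (cardSuc |K| ). Pow (underS (cardSuc |K| ) \<beta> \<times> K)| \<le>o |Pow K|"
proof (rule card_of_UNION_ordLeq_infinite)
  show "infinite (Pow K)"
    using assms by simp
  have "cardSuc |K| \<le>o |Pow K|"
    using cardSuc_least[OF card_of_Card_order card_of_Card_order card_of_Pow] .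
  then show "|Field (cardSuc |K| )| \<le>o |Pow K|"
    using card_of_Field_ordIso[OF cardSuc_Card_order[OF card_of_Card_order]] ordIso_ordLeq_trans
    by blast
  show "\<forall>\<beta>\<in>Field (cardSuc |K| ). |Pow (underS (cardSuc |K| ) \<beta> \<times> K)| \<le>o |Pow K|"
  proof
    fix \<beta> assume "\<beta> \<in> Field (cardSuc |K| )"
    then have "|underS (cardSuc |K| ) \<beta>| <o cardSuc |K|"
      by (rule card_of_underS[OF cardSuc_Card_order[OF card_of_Card_order]])
    then have "|underS (cardSuc |K| ) \<beta>| \<le>o |K|"
      using cardSuc_ordLeq_ordLess[OF card_of_Card_order card_of_Card_order] by blast
    then have "|underS (cardSuc |K| ) \<beta> \<times> K| \<le>o |K|"
      using card_of_Times_ordLeq_infinite[OF assms] ordLeq_reflexive[OF card_of_Well_order] by blast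
    then show "|Pow (underS (cardSuc |K| ) \<beta> \<times> K)| \<le>o |Pow K|"
      by (rule card_of_Pow_mono_ordLeq)
  qed
qed

locale canonical_tree_colouring = canonical_tree S W f
  for S :: "'a set" and W and f :: "'a \<Rightarrow> 'a \<Rightarrow> 'k" +
  fixes K :: "'k set"
  assumes infinite_K: "infinite K"
    and colour_in_K: "\<And>x y. x \<in> S \<Longrightarrow> y \<in> S \<Longrightarrow> f x y \<in> K"
begin

abbreviation K_plus :: "'k set rel" where
  "K_plus \<equiv> cardSuc |K|"

definition small_nodes :: "'a set" where
  "small_nodes = {x \<in> S. |tree_pred x| \<le>o |K|}"

text \<open>A node with at most \<open>|K|\<close> tree predecessors is coded by the colours it has with them,
  indexed by their positions in the well-ordered branch below it, as ordinals below \<open>K_plus\<close>.\<close>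

definition branch_pos :: "'a \<Rightarrow> 'a \<Rightarrow> 'k set" where
  "branch_pos x = (SOME e. embed (Restr W (tree_pred x)) K_plus e)"

definition node_code :: "'a \<Rightarrow> ('k set \<times> 'k) set" where
  "node_code x = (\<lambda>z. (branch_pos x z, f z x)) ` tree_pred x"

lemma Card_order_K_plus: "Card_order K_plus"
  using cardSuc_Card_order[OF card_of_Card_order] .

lemma Field_Restr_tree_pred: "Field (Restr W (tree_pred x)) = tree_pred x"
  using W_refl tree_pred_subset unfolding Field_def by blast

lemma Well_order_Restr_tree_pred: "Well_order (Restr W (tree_pred x))"
  using Well_order_Restr[OF Well_order_W] .

lemma branch_pos_embed:
  assumes "x \<in> small_nodes"
  shows "embed (Restr W (tree_pred x)) K_plus (branch_pos x)"
proof -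
  have "Restr W (tree_pred x) <o K_plus"
    using assms Well_order_Restr_tree_pred
    by (intro ordLess_cardSuc_of_card_of_Field)
      (simp_all add: small_nodes_def Field_Restr_tree_pred)
  then have "\<exists>e. embed (Restr W (tree_pred x)) K_plus e"
    using ordLess_imp_ordLeq unfolding ordLeq_def by blast
  then show ?thesis
    unfolding branch_pos_def by (rule someI_ex)
qed

lemma inj_on_branch_pos: "x \<in> small_nodes \<Longrightarrow> inj_on (branch_pos x) (tree_pred x)"
  using embed_inj_on[OF Well_order_Restr_tree_pred branch_pos_embed] Field_Restr_tree_pred by simp

lemma branch_pos_strict_mono:
  assumes "x \<in> small_nodes" and "z \<in> tree_pred x" and "w \<in> tree_pred x" and "(w, z) \<in> Ws"
  shows "(branch_pos x w, branch_pos x z) \<in> K_plus \<and> branch_pos x w \<noteq> branch_pos x z"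
proof
  have "(w, z) \<in> Restr W (tree_pred x)"
    using assms(2-4) Ws_iff by blast
  then show "(branch_pos x w, branch_pos x z) \<in> K_plus"
    using embed_compat[OF branch_pos_embed[OF assms(1)]] unfolding compat_def by blast
  show "branch_pos x w \<noteq> branch_pos x z"
    using inj_on_branch_pos[OF assms(1)] assms(2-4) Ws_irrefl by (metis inj_onD)
qed

lemma branch_pos_underS:
  assumes "x \<in> small_nodes" and "z \<in> tree_pred x" and "b \<in> underS K_plus (branch_pos x z)"
  obtains u where "u \<in> tree_pred x" and "(u, z) \<in> Ws" and "b = branch_pos x u"
proof -
  have "bij_betw (branch_pos x) (underS (Restr W (tree_pred x)) z) (underS K_plus (branch_pos x z))"
    using embed_underS[OF Well_order_Restr_tree_pred branch_pos_embed[OF assms(1)]] assms(2)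
    by (simp add: Field_Restr_tree_pred)
  then obtain u where "u \<in> underS (Restr W (tree_pred x)) z" "b = branch_pos x u"
    using assms(3) unfolding bij_betw_def by blast
  then show ?thesis
    using that unfolding underS_def by (auto simp: Ws_iff)
qed

lemma branch_pos_image_bounded:
  assumes "x \<in> small_nodes"
  shows "\<exists>\<beta>\<in>Field K_plus. branch_pos x ` tree_pred x \<subseteq> underS K_plus \<beta>"
proof (rule ofilter_bounded_if_small[OF Card_order_K_plus])
  show "infinite (Field K_plus)"
    using card_of_cardSuc_finite infinite_K by blast
  show "wo_rel.ofilter K_plus (branch_pos x ` tree_pred x)"
    using embed_Field_ofilter[OF Well_order_Restr_tree_pred
        cardSuc_Well_order[OF card_of_Card_order] branch_pos_embed[OF assms]]
    by (simp add: Field_Restr_tree_pred)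
  have "|branch_pos x ` tree_pred x| \<le>o |K|"
    using assms card_of_image ordLeq_transitive unfolding small_nodes_def by blast
  then show "|branch_pos x ` tree_pred x| <o K_plus"
    using ordLeq_ordLess_trans cardSuc_greater[OF card_of_Card_order] by blast
qed

lemma antisym_K_plus: "antisym K_plus"
  using cardSuc_Well_order[OF card_of_Card_order[of K]] by (simp add: wo_rel.ANTISYM wo_rel_def)

lemma node_code_match:
  assumes "node_code x = node_code x'" and "z \<in> tree_pred x"
  obtains z' where "z' \<in> tree_pred x'" and "branch_pos x' z' = branch_pos x z" and "f z' x' = f z x"
proof -
  have "(branch_pos x z, f z x) \<in> node_code x"
    unfolding node_code_def using assms(2) by (rule rev_image_eqI) simp
  then have "(branch_pos x z, f z x) \<in> node_code x'"
    using assms(1) by simp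
  then obtain z' where "z' \<in> tree_pred x'" "(branch_pos x z, f z x) = (branch_pos x' z', f z' x')"
    unfolding node_code_def by blast
  then show ?thesis
    using that by simp
qed

context
  fixes x x'
  assumes x: "x \<in> small_nodes" and x': "x' \<in> small_nodes"
    and same_code: "node_code x = node_code x'"
begin

lemma node_code_eq_tree_pred_eq:
  assumes z: "z \<in> tree_pred x" and z': "z' \<in> tree_pred x'" "branch_pos x' z' = branch_pos x z"
    and IH: "\<And>w. w \<in> tree_pred x \<Longrightarrow> (w, z) \<in> Ws \<Longrightarrow>
      w \<in> tree_pred x' \<and> branch_pos x w = branch_pos x' w"
  shows "tree_pred z = tree_pred z'"
proof -
  have "w \<in> tree_pred x' \<and> (w, z') \<in> Ws" if w: "w \<in> tree_pred x" "(w, z) \<in> Ws" for w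
  proof -
    have w': "w \<in> tree_pred x'" "branch_pos x w = branch_pos x' w"
      using IH w by auto
    have less: "(branch_pos x' w, branch_pos x' z') \<in> K_plus" "branch_pos x' w \<noteq> branch_pos x' z'"
      using branch_pos_strict_mono[OF x z w] w'(2) z'(2) by auto
    have "(z', w) \<notin> Ws"
    proof
      assume "(z', w) \<in> Ws"
      then have "(branch_pos x' z', branch_pos x' w) \<in> K_plus"
        using branch_pos_strict_mono[OF x' w'(1) z'(1)] by auto
      then show False
        using less antisym_K_plus unfolding antisym_def by blast
    qed
    moreover have "w \<noteq> z'"
      using less by auto
    ultimately show ?thesis
      using Ws_total tree_pred_subset w'(1) z'(1) by blast
  qed
  moreover have "w \<in> tree_pred x \<and> (w, z) \<in> Ws" if w: "w \<in> tree_pred x'" "(w, z') \<in> Ws" for w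
  proof -
    have "branch_pos x' w \<in> underS K_plus (branch_pos x z)"
      using branch_pos_strict_mono[OF x' z'(1) w] z'(2) unfolding underS_def by auto
    then obtain u where u: "u \<in> tree_pred x" "(u, z) \<in> Ws" "branch_pos x' w = branch_pos x u"
      using branch_pos_underS[OF x z] by blast
    have "u \<in> tree_pred x'" "branch_pos x u = branch_pos x' u"
      using IH u(1,2) by auto
    then have "w = u"
      using inj_onD[OF inj_on_branch_pos[OF x'] _ w(1)] u(3) by simp
    then show ?thesis
      using u by simp
  qed
  ultimately show ?thesis
    unfolding tree_pred_tree_pred[OF z] tree_pred_tree_pred[OF z'(1)] by blast
qed

lemma node_code_eq_colour_eq:
  assumes z: "z \<in> tree_pred x" and z': "z' \<in> tree_pred x'"
    and IH: "\<And>w. w \<in> tree_pred x \<Longrightarrow> (w, z) \<in> Ws \<Longrightarrow>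
      w \<in> tree_pred x' \<and> branch_pos x w = branch_pos x' w"
    and eq: "tree_pred z = tree_pred z'" and w: "w \<in> tree_pred z"
  shows "f w z = f w z'"
proof -
  have w1: "w \<in> tree_pred x" "(w, z) \<in> Ws"
    using w tree_pred_tree_pred[OF z] by auto
  have w2: "w \<in> tree_pred x'" "(w, z') \<in> Ws"
    using w eq tree_pred_tree_pred[OF z'] by auto
  obtain u where u: "u \<in> tree_pred x'" "branch_pos x' u = branch_pos x w" "f u x' = f w x"
    using node_code_match[OF same_code w1(1)] .
  have "branch_pos x w = branch_pos x' w"
    using IH w1 by blast
  then have "u = w"
    using inj_onD[OF inj_on_branch_pos[OF x'] _ u(1) w2(1)] u(2) by simp
  then show ?thesis
    using u(3) tree_pred_colour[OF w1(1) z w1(2)] tree_pred_colour[OF w2(1) z' w2(2)] by simp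
qed

lemma node_code_eq_tree_pred_subset:
  "z \<in> tree_pred x \<Longrightarrow> z \<in> tree_pred x' \<and> branch_pos x z = branch_pos x' z"
proof (induction z rule: wf_induct[OF wf_Ws])
  case (1 z)
  obtain z' where z': "z' \<in> tree_pred x'" "branch_pos x' z' = branch_pos x z" "f z' x' = f z x"
    using node_code_match[OF same_code 1(2)] .
  have IH: "\<And>w. w \<in> tree_pred x \<Longrightarrow> (w, z) \<in> Ws \<Longrightarrow> w \<in> tree_pred x' \<and> branch_pos x w = branch_pos x' w"
    using 1(1) by blast
  have eq: "tree_pred z = tree_pred z'"
    using node_code_eq_tree_pred_eq[OF 1(2) z'(1,2) IH] .
  have "z = z'"
    using tree_pred_inject[OF _ _ eq] node_code_eq_colour_eq[OF 1(2) z'(1) IH eq]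
      tree_pred_subset 1(2) z'(1) by blast
  then show ?case
    using z' by simp
qed

end

lemma inj_on_node_code: "inj_on node_code small_nodes"
proof (rule inj_onI)
  fix x x'
  assume x: "x \<in> small_nodes" and x': "x' \<in> small_nodes" and eq: "node_code x = node_code x'"
  have sub: "z \<in> tree_pred x' \<and> branch_pos x z = branch_pos x' z" if "z \<in> tree_pred x" for z
    using node_code_eq_tree_pred_subset[OF x x' eq that] .
  have "tree_pred x = tree_pred x'"
    using sub node_code_eq_tree_pred_subset[OF x' x eq[symmetric]] by blast
  moreover have "f z x = f z x'" if z: "z \<in> tree_pred x" for z
  proof -
    obtain u where u: "u \<in> tree_pred x'" "branch_pos x' u = branch_pos x z" "f u x' = f z x"
      using node_code_match[OF eq z] .
    have "u = z"
      using inj_onD[OF inj_on_branch_pos[OF x'] _ u(1)] u(2) sub[OF z] by simp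
    then show ?thesis
      using u(3) by simp
  qed
  ultimately show "x = x'"
    using tree_pred_inject x x' unfolding small_nodes_def by blast
qed

lemma node_code_in_bounded_graphs:
  assumes "x \<in> small_nodes"
  shows "node_code x \<in> (\<Union>\<beta>\<in>Field K_plus. Pow (underS K_plus \<beta> \<times> K))"
proof -
  obtain \<beta> where \<beta>: "\<beta> \<in> Field K_plus" "branch_pos x ` tree_pred x \<subseteq> underS K_plus \<beta>"
    using branch_pos_image_bounded[OF assms] by blast
  have "f z x \<in> K" if "z \<in> tree_pred x" for z
    using colour_in_K tree_pred_subset that assms unfolding small_nodes_def by blast
  then have "node_code x \<subseteq> underS K_plus \<beta> \<times> K"
    using \<beta>(2) unfolding node_code_def by auto
  then show ?thesis
    using \<beta>(1) by blast
qed

lemma card_of_small_nodes: "|small_nodes| \<le>o |Pow K|"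
proof -
  have "|small_nodes| \<le>o |\<Union>\<beta>\<in>Field K_plus. Pow (underS K_plus \<beta> \<times> K)|"
    using card_of_ordLeq inj_on_node_code node_code_in_bounded_graphs by blast
  then show ?thesis
    using card_of_bounded_graphs[OF infinite_K] ordLeq_transitive by blast
qed

lemma exists_node_with_many_preds:
  assumes "|Pow K| <o |S|"
  obtains x where "x \<in> S" and "|K| <o |tree_pred x|"
proof -
  have "small_nodes \<noteq> S"
    using card_of_small_nodes assms not_ordLess_ordLeq by metis
  then obtain x where "x \<in> S" "\<not> |tree_pred x| \<le>o |K|"
    unfolding small_nodes_def by blast
  then show ?thesis
    using that not_ordLeq_iff_ordLess[OF card_of_Well_order card_of_Well_order] by blast
qed

end

theorem erdos_rado_omega:
  fixes f :: "'a \<Rightarrow> 'a \<Rightarrow> 'k"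
  assumes K: "infinite K" and S: "|Pow K| <o |S|"
    and f: "f \<in> S \<rightarrow> S \<rightarrow> K"
  obtains h :: "nat \<Rightarrow> 'a" and k where "inj h" and "range h \<subseteq> S"
    and "\<And>m n. m < n \<Longrightarrow> f (h m) (h n) = k"
proof -
  obtain W where W: "well_order_on S W"
    using well_order_on by blast
  interpret canonical_tree_colouring S W f K
    by unfold_locales (use W K f in \<open>auto simp: Pi_iff\<close>)
  obtain x where x: "x \<in> S" "|K| <o |tree_pred x|"
    using exists_node_with_many_preds[OF S] .
  define H where "H k = {z \<in> tree_pred x. f z x = k}" for k
  have "tree_pred x = (\<Union>k\<in>K. H k)"
    using colour_in_K[OF _ x(1)] tree_pred_subset unfolding H_def by auto
  then obtain k where k: "k \<in> K" "|K| <o |H k|"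
    using card_of_UNION_pigeonhole[OF K ordLeq_reflexive[OF card_of_Well_order]] x(2) by metis
  have inf: "infinite (H k)"
  proof
    assume "finite (H k)"
    then have "|H k| \<le>o |K|"
      using card_of_finite_ordLeq_infinite K by blast
    then show False
      using k(2) not_ordLess_ordLeq by blast
  qed
  have total: "(a, b) \<in> Ws \<or> (b, a) \<in> Ws" if "a \<in> H k" "b \<in> H k" "a \<noteq> b" for a b
    using Ws_total tree_pred_subset that unfolding H_def by blast
  obtain h :: "nat \<Rightarrow> 'a" where h: "inj h" "range h \<subseteq> H k"
    "\<And>m n. m < n \<Longrightarrow> (h m, h n) \<in> Ws"
    using wf_infinite_increasing_seq[OF wf_Ws inf] total by metis
  have hx: "h i \<in> tree_pred x" "f (h i) x = k" for i
    using h(2) unfolding H_def by auto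
  have "range h \<subseteq> S"
    using hx(1) tree_pred_subset by blast
  moreover have "f (h m) (h n) = k" if "m < n" for m n
    using tree_pred_colour[OF hx(1) hx(1) h(3)[OF that]] hx(2) by simp
  ultimately show ?thesis
    using h(1) that by blast
qed

section \<open>Monochromatic omega-blocks in groups\<close>

definition seq_prod :: "('a, 'b) monoid_scheme \<Rightarrow> (nat \<Rightarrow> 'a) \<Rightarrow> nat \<Rightarrow> 'a" where
  "seq_prod G b n = foldr (\<lambda>i acc. b i \<otimes>\<^bsub>G\<^esub> acc) [0..<Suc n] \<one>\<^bsub>G\<^esub>"

lemma seq_prod_0: "seq_prod G b 0 = b 0 \<otimes>\<^bsub>G\<^esub> \<one>\<^bsub>G\<^esub>"
  by (simp add: seq_prod_def)

lemma seq_prod_Suc: "seq_prod G b (Suc n) = b 0 \<otimes>\<^bsub>G\<^esub> seq_prod G (\<lambda>i. b (Suc i)) n"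
proof -
  have "[0..<Suc (Suc n)] = 0 # map Suc [0..<Suc n]"
    by (simp add: map_Suc_upt upt_conv_Cons del: upt_Suc)
  then show ?thesis
    by (simp add: seq_prod_def foldr_map o_def del: upt_Suc)
qed

lemma adj_prod_eq_seq_prod: "adj_prod G r g a n = seq_prod G (\<lambda>i. g (oplusn r a i)) n"
  unfolding adj_prod_def seq_prod_def ..

definition AFP_mono_seq :: "('a, 'b) monoid_scheme \<Rightarrow> ('a \<Rightarrow> 'k) \<Rightarrow> 'k \<Rightarrow> (nat \<Rightarrow> 'a) \<Rightarrow> bool" where
  "AFP_mono_seq G c k b \<longleftrightarrow>
     inj b \<and> range b \<subseteq> carrier G \<and> (\<forall>m n. c (seq_prod G (\<lambda>i. b (m + i)) n) = k)"

context group
begin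

lemma seq_prod_telescope:
  assumes "\<And>i. h i \<in> carrier G"
  shows "seq_prod G (\<lambda>i. inv (h i) \<otimes> h (Suc i)) n = inv (h 0) \<otimes> h (Suc n)"
  using assms
proof (induction n arbitrary: h)
  case 0
  then show ?case
    by (simp add: seq_prod_0)
next
  case (Suc n)
  have "seq_prod G (\<lambda>i. inv (h i) \<otimes> h (Suc i)) (Suc n)
      = (inv (h 0) \<otimes> h 1) \<otimes> (inv (h 1) \<otimes> h (Suc (Suc n)))"
    using Suc.IH[of "\<lambda>i. h (Suc i)"] Suc.prems by (simp add: seq_prod_Suc)
  also have "\<dots> = inv (h 0) \<otimes> (h 1 \<otimes> (inv (h 1) \<otimes> h (Suc (Suc n))))"
    using Suc.prems by (simp add: m_assoc)
  also have "h 1 \<otimes> (inv (h 1) \<otimes> h (Suc (Suc n))) = h (Suc (Suc n))"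
    using Suc.prems by (simp add: m_assoc[symmetric])
  finally show ?case .
qed

lemma left_quotient_avoids_finite:
  fixes h :: "nat \<Rightarrow> 'a"
  assumes "inj h" and "range h \<subseteq> carrier G" and "finite F"
  obtains t where "x < t" and "inv (h x) \<otimes> h t \<notin> F"
proof -
  have "inj_on (\<lambda>t. inv (h x) \<otimes> h t) {x<..}"
  proof (rule inj_onI)
    fix a b assume "inv (h x) \<otimes> h a = inv (h x) \<otimes> h b"
    then have "h a = h b"
      using assms(2) by (simp add: image_subset_iff)
    then show "a = b"
      using assms(1) by (simp add: inj_eq)
  qed
  then have "infinite ((\<lambda>t. inv (h x) \<otimes> h t) ` {x<..})"
    using finite_imageD infinite_Ioi[of x] by blast
  then have "\<not> (\<lambda>t. inv (h x) \<otimes> h t) ` {x<..} \<subseteq> F"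
    using finite_subset[OF _ assms(3)] by blast
  then obtain t where "x < t" "inv (h x) \<otimes> h t \<notin> F"
    by auto
  then show ?thesis
    by (rule that)
qed

lemma subseq_with_inj_quotients:
  assumes inj: "inj h" and carrier: "range h \<subseteq> carrier G"
  obtains j :: "nat \<Rightarrow> nat"
    where "strict_mono j" and "inj (\<lambda>n. inv (h (j n)) \<otimes> h (j (Suc n)))"
proof -
  define F where "F x = (\<lambda>(p, q). inv (h p) \<otimes> h q) ` {(p, q). p < q \<and> q \<le> x}" for x
  have "finite {(p, q). p < q \<and> q \<le> x}" for x :: nat
    by (rule finite_subset[of _ "{..x} \<times> {..x}"]) auto
  then have "finite (F x)" for x
    unfolding F_def by blast
  then have ex: "\<exists>t. x < t \<and> inv (h x) \<otimes> h t \<notin> F x" for x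
    using left_quotient_avoids_finite[OF inj carrier] by metis
  \<comment> \<open>Each next index is chosen so that the new quotient differs from all earlier ones.\<close>
  define s where "s x = (LEAST t. x < t \<and> inv (h x) \<otimes> h t \<notin> F x)" for x
  have s: "x < s x" "inv (h x) \<otimes> h (s x) \<notin> F x" for x
    using LeastI_ex[OF ex[of x]] unfolding s_def by auto
  define j where "j n = (s ^^ n) 0" for n
  have j_Suc: "j (Suc n) = s (j n)" for n
    by (simp add: j_def)
  have mono: "strict_mono j"
    unfolding strict_mono_Suc_iff using j_Suc s(1) by simp
  have "inv (h (j m)) \<otimes> h (j (Suc m)) \<noteq> inv (h (j n)) \<otimes> h (j (Suc n))" if "m < n" for m n
  proof -
    have "j m < j (Suc m)" "j (Suc m) \<le> j n"
      using mono that by (simp_all add: strict_mono_less strict_mono_less_eq)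
    then have "(j m, j (Suc m)) \<in> {(p, q). p < q \<and> q \<le> j n}"
      by simp
    then have "inv (h (j m)) \<otimes> h (j (Suc m)) \<in> F (j n)"
      unfolding F_def by (rule rev_image_eqI) simp
    moreover have "inv (h (j n)) \<otimes> h (j (Suc n)) \<notin> F (j n)"
      using s(2) by (simp add: j_Suc)
    ultimately show ?thesis
      by auto
  qed
  then have "inj (\<lambda>n. inv (h (j n)) \<otimes> h (j (Suc n)))"
    by (rule linorder_injI)
  with mono show ?thesis
    by (rule that)
qed

lemma AFP_mono_seq_of_homogeneous:
  fixes h :: "nat \<Rightarrow> 'a"
  assumes inj: "inj h" and carrier: "range h \<subseteq> carrier G"
    and hom: "\<And>m n. m < n \<Longrightarrow> c (inv (h m) \<otimes> h n) = k"
  obtains b where "AFP_mono_seq G c k b" and "range b \<subseteq> {inv (h p) \<otimes> h q | p q. p < q}"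
proof -
  obtain j :: "nat \<Rightarrow> nat" where mono: "strict_mono j"
    and inj_b: "inj (\<lambda>n. inv (h (j n)) \<otimes> h (j (Suc n)))"
    using subseq_with_inj_quotients[OF inj carrier] by blast
  define b where "b n = inv (h (j n)) \<otimes> h (j (Suc n))" for n
  have h_carrier: "h i \<in> carrier G" for i
    using carrier by blast
  have "seq_prod G (\<lambda>i. b (m + i)) n = inv (h (j m)) \<otimes> h (j (Suc (m + n)))" for m n
    using seq_prod_telescope[of "\<lambda>i. h (j (m + i))" n] h_carrier by (simp add: b_def)
  moreover have "j m < j (Suc (m + n))" for m n
    using mono by (simp add: strict_mono_less)
  ultimately have "c (seq_prod G (\<lambda>i. b (m + i)) n) = k" for m n
    using hom by simp
  moreover have "inj b"
    using inj_b by (simp add: b_def[abs_def])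
  moreover have "range b \<subseteq> carrier G"
    using h_carrier by (auto simp: b_def)
  ultimately have "AFP_mono_seq G c k b"
    by (simp add: AFP_mono_seq_def)
  moreover have "range b \<subseteq> {inv (h p) \<otimes> h q | p q. p < q}"
    using mono unfolding b_def strict_mono_def by blast
  ultimately show ?thesis
    by (rule that)
qed

lemma large_quotient_free_subset:
  assumes C: "infinite C" and U: "|U| \<le>o |C|" and G: "|C| <o |carrier G|"
  obtains T where "T \<subseteq> carrier G" and "|C| <o |T|"
    and "\<And>x y. x \<in> T \<Longrightarrow> y \<in> T \<Longrightarrow> x \<noteq> y \<Longrightarrow> inv x \<otimes> y \<notin> U"
proof -
  obtain T where T: "T \<subseteq> carrier G" "pairwise (\<lambda>x y. inv x \<otimes> y \<notin> U) T"
    and max: "\<And>z. z \<in> carrier G \<Longrightarrow> z \<notin> T \<Longrightarrow> \<exists>y\<in>T. inv z \<otimes> y \<in> U \<or> inv y \<otimes> z \<in> U"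
    using maximal_pairwise_subset[of "carrier G" "\<lambda>x y. inv x \<otimes> y \<notin> U"] by auto
  have "|C| <o |T|"
  proof (rule ccontr)
    assume "\<not> |C| <o |T|"
    then have T_small: "|T| \<le>o |C|"
      using not_ordLess_iff_ordLeq[OF card_of_Well_order card_of_Well_order] by blast
    \<comment> \<open>Every element outside \<open>Z\<close> could be added to the maximal set \<open>T\<close>.\<close>
    define Z where "Z = T \<union> (\<lambda>(y, u). y \<otimes> u) ` (T \<times> U) \<union> (\<lambda>(y, u). y \<otimes> inv u) ` (T \<times> U)"
    have "|T \<times> U| \<le>o |C|"
      using card_of_Times_ordLeq_infinite[OF C T_small U] .
    then have "|Z| \<le>o |C|"
      unfolding Z_def using C T_small card_of_image ordLeq_transitive
      by (metis card_of_Un_ordLeq_infinite)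
    then have "\<not> carrier G \<subseteq> Z"
      using G card_of_mono1 ordLeq_transitive not_ordLess_ordLeq by metis
    then obtain z where z: "z \<in> carrier G" "z \<notin> Z"
      by blast
    then obtain y where y: "y \<in> T" "inv z \<otimes> y \<in> U \<or> inv y \<otimes> z \<in> U"
      using max unfolding Z_def by blast
    have yz: "y \<in> carrier G" "z \<in> carrier G"
      using y(1) T(1) z(1) by blast+
    have "z = y \<otimes> inv (inv z \<otimes> y)" "z = y \<otimes> (inv y \<otimes> z)"
      using yz by (simp_all add: inv_mult_group m_assoc[symmetric])
    then have "z \<in> Z"
      using y unfolding Z_def by force
    then show False
      using z(2) by contradiction
  qed
  moreover have "inv x \<otimes> y \<notin> U" if "x \<in> T" "y \<in> T" "x \<noteq> y" for x y
    using T(2) that by (simp add: pairwise_def)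
  ultimately show ?thesis
    using T(1) that by blast
qed

lemma AFP_mono_seq_avoiding:
  assumes K: "infinite K" and c: "c \<in> carrier G \<rightarrow> K"
    and U: "|U| \<le>o |Pow K|" and G: "|Pow K| <o |carrier G|"
  obtains k b where "k \<in> K" and "AFP_mono_seq G c k b" and "range b \<inter> U = {}"
proof -
  have PowK: "infinite (Pow K)"
    using K by simp
  obtain T where T: "T \<subseteq> carrier G" "|Pow K| <o |T|"
    and free: "\<And>x y. x \<in> T \<Longrightarrow> y \<in> T \<Longrightarrow> x \<noteq> y \<Longrightarrow> inv x \<otimes> y \<notin> U"
    by (rule large_quotient_free_subset[OF PowK U G]) (rule that)
  have cT: "(\<lambda>x y. c (inv x \<otimes> y)) \<in> T \<rightarrow> T \<rightarrow> K"
  proof (intro Pi_I)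
    fix x y assume "x \<in> T" "y \<in> T"
    then have "inv x \<otimes> y \<in> carrier G"
      using T(1) by blast
    then show "c (inv x \<otimes> y) \<in> K"
      using c by blast
  qed
  obtain h :: "nat \<Rightarrow> 'a" and k where h: "inj h" "range h \<subseteq> T"
    and hom: "\<And>m n. m < n \<Longrightarrow> c (inv (h m) \<otimes> h n) = k"
    by (rule erdos_rado_omega[OF K T(2) cT]) (rule that)
  have "h 0 \<in> T" "h 1 \<in> T"
    using h(2) by auto
  then have "c (inv (h 0) \<otimes> h 1) \<in> K"
    using funcset_mem[OF funcset_mem[OF cT]] by blast
  then have kK: "k \<in> K"
    using hom[of 0 1] by simp
  have "range h \<subseteq> carrier G"
    using h(2) T(1) by blast
  then obtain b where b: "AFP_mono_seq G c k b" "range b \<subseteq> {inv (h p) \<otimes> h q | p q. p < q}"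
    by (rule AFP_mono_seq_of_homogeneous[of h c k, OF h(1) _ hom])
  have "x \<notin> U" if x: "x \<in> range b" for x
  proof -
    obtain p q where pq: "p < q" "x = inv (h p) \<otimes> h q"
      using b(2) x by blast
    have "h p \<in> T" "h q \<in> T"
      using h(2) by auto
    moreover have "h p \<noteq> h q"
      using h(1) pq(1) by (simp add: inj_eq)
    ultimately show ?thesis
      using free pq(2) by blast
  qed
  then have "range b \<inter> U = {}"
    by blast
  with kK b(1) show ?thesis
    by (rule that)
qed

lemma large_disjoint_family_of_AFP_mono_seqs:
  assumes K: "infinite K" and c: "c \<in> carrier G \<rightarrow> K" and G: "|Pow K| <o |carrier G|"
  obtains k M where "|Pow K| <o |M|" and "\<And>b. b \<in> M \<Longrightarrow> AFP_mono_seq G c k b"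
    and "disjoint_family_on range M"
proof -
  define A where "A = {b. \<exists>k\<in>K. AFP_mono_seq G c k b}"
  obtain M where M: "M \<subseteq> A" "pairwise (\<lambda>b b'. disjnt (range b) (range b')) M"
    and max: "\<And>b. b \<in> A \<Longrightarrow> b \<notin> M \<Longrightarrow>
      \<exists>b'\<in>M. \<not> disjnt (range b) (range b') \<or> \<not> disjnt (range b') (range b)"
    by (rule maximal_pairwise_subset[of A "\<lambda>b b'. disjnt (range b) (range b')"]) (rule that)
  have PowK: "infinite (Pow K)"
    using K by simp
  have "|Pow K| <o |M|"
  proof (rule ccontr)
    assume "\<not> |Pow K| <o |M|"
    then have "|M| \<le>o |Pow K|"
      using not_ordLess_iff_ordLeq[OF card_of_Well_order card_of_Well_order] by blast
    moreover have "|range b| \<le>o |Pow K|" for b :: "nat \<Rightarrow> 'a"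
      using card_of_image[of b UNIV] PowK[unfolded infinite_iff_card_of_nat]
      by (rule ordLeq_transitive)
    ultimately have "|\<Union>b\<in>M. range b| \<le>o |Pow K|"
      using PowK by (simp add: card_of_UNION_ordLeq_infinite)
    then obtain k b where b: "k \<in> K" "AFP_mono_seq G c k b" "range b \<inter> (\<Union>b\<in>M. range b) = {}"
      by (rule AFP_mono_seq_avoiding[OF K c _ G])
    then have "b \<in> A" "b \<notin> M"
      unfolding A_def by auto
    then show False
      using max b(3) unfolding disjnt_def by blast
  qed
  moreover have "M = (\<Union>k\<in>K. {b \<in> M. AFP_mono_seq G c k b})"
    using M(1) unfolding A_def by blast
  ultimately have "|Pow K| <o |\<Union>k\<in>K. {b \<in> M. AFP_mono_seq G c k b}|"
    by simp
  moreover have "|K| \<le>o |Pow K|"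
    using card_of_Pow ordLess_imp_ordLeq by blast
  ultimately obtain k where "k \<in> K" "|Pow K| <o |{b \<in> M. AFP_mono_seq G c k b}|"
    using card_of_UNION_pigeonhole[OF PowK] by blast
  moreover have "disjoint_family_on range {b \<in> M. AFP_mono_seq G c k b}"
    using M(2) unfolding disjoint_family_on_def pairwise_def disjnt_def by blast
  ultimately show ?thesis
    using that by blast
qed

lemma AFP_mono_seq_finite_colours:
  assumes K: "finite K" and c: "c \<in> carrier G \<rightarrow> K" and G: "infinite (carrier G)"
  obtains k b where "AFP_mono_seq G c k b"
proof -
  obtain u :: "nat \<Rightarrow> 'a" where u: "inj u" "range u \<subseteq> carrier G"
    using infinite_countable_subset[OF G] by blast
  have "c (inv (u m) \<otimes> u n) \<in> K" for m n
    using c u(2) by blast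
  then obtain \<sigma> :: "nat \<Rightarrow> nat" and k where \<sigma>: "strict_mono \<sigma>"
    and hom: "\<And>m n. m < n \<Longrightarrow> c (inv (u (\<sigma> m)) \<otimes> u (\<sigma> n)) = k"
    by (rule ramsey_increasing_pairs[OF K, of "\<lambda>m n. c (inv (u m) \<otimes> u n)"]) (rule that)
  have "inj (\<lambda>n. u (\<sigma> n))"
    using inj_compose[OF u(1) strict_mono_imp_inj_on[OF \<sigma>]] by (simp add: comp_def)
  moreover have "range (\<lambda>n. u (\<sigma> n)) \<subseteq> carrier G"
    using u(2) by auto
  ultimately obtain b where "AFP_mono_seq G c k b"
    using AFP_mono_seq_of_homogeneous[of "\<lambda>n. u (\<sigma> n)" c k, OF _ _ hom] by blast
  then show ?thesis
    by (rule that)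
qed

end

section \<open>Decomposing an infinite cardinal into omega-blocks\<close>

lemma oplusn_0 [simp]: "oplusn r a 0 = a"
  by (simp add: oplusn_def)

lemma oplusn_Suc: "oplusn r a (Suc n) = osucc r (oplusn r a n)"
  by (simp add: oplusn_def)

lemma oplusn_oplusn: "oplusn r (oplusn r a m) n = oplusn r a (m + n)"
  by (simp add: oplusn_def add.commute[of m n] funpow_add)

locale infinite_card_order =
  fixes r :: "'i rel"
  assumes Card_order: "Card_order r" and infinite_Field: "infinite (Field r)"
begin

lemma wo_rel: "wo_rel r"
  using Card_order unfolding card_order_on_def wo_rel_def by auto

lemma r_refl: "a \<in> Field r \<Longrightarrow> (a, a) \<in> r"
  using wo_rel.REFL[OF wo_rel] unfolding refl_on_def by blast

lemma r_trans: "(a, b) \<in> r \<Longrightarrow> (b, c) \<in> r \<Longrightarrow> (a, c) \<in> r"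
  using wo_rel.TRANS[OF wo_rel] unfolding trans_def by blast

lemma r_antisym: "(a, b) \<in> r \<Longrightarrow> (b, a) \<in> r \<Longrightarrow> a = b"
  using wo_rel.ANTISYM[OF wo_rel] unfolding antisym_def by blast

lemma r_total: "a \<in> Field r \<Longrightarrow> b \<in> Field r \<Longrightarrow> (a, b) \<in> r \<or> (b, a) \<in> r"
  using wo_rel.TOTALS[OF wo_rel] by blast

lemma r_in_Field: "(a, b) \<in> r \<Longrightarrow> a \<in> Field r \<and> b \<in> Field r"
  unfolding Field_def by blast

lemma AboveS_nonempty: "a \<in> Field r \<Longrightarrow> AboveS r {a} \<noteq> {}"
  using infinite_Card_order_limit[OF Card_order infinite_Field] unfolding AboveS_def by blast

lemma osucc:
  assumes "a \<in> Field r"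
  shows "osucc r a \<in> Field r" and "(a, osucc r a) \<in> r" and "osucc r a \<noteq> a"
  using wo_rel.suc_inField[OF wo_rel _ AboveS_nonempty]
    wo_rel.suc_greater[OF wo_rel _ AboveS_nonempty] assms
  unfolding osucc_def by auto

lemma osucc_least:
  assumes "a \<in> Field r" and "(a, b) \<in> r" and "a \<noteq> b"
  shows "(osucc r a, b) \<in> r"
  using wo_rel.suc_least_AboveS[OF wo_rel] assms r_in_Field unfolding osucc_def AboveS_def by auto

lemma oplusn_in_Field: "a \<in> Field r \<Longrightarrow> oplusn r a n \<in> Field r"
  by (induction n) (auto simp: oplusn_Suc osucc)

lemma oplusn_above: "a \<in> Field r \<Longrightarrow> (a, oplusn r a n) \<in> r"
proof (induction n)
  case 0
  then show ?case
    by (simp add: r_refl)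
next
  case (Suc n)
  then show ?case
    using osucc(2)[OF oplusn_in_Field] r_trans by (metis oplusn_Suc)
qed

lemma oplusn_strict:
  assumes "a \<in> Field r" and "p < q"
  shows "(oplusn r a p, oplusn r a q) \<in> r" and "oplusn r a p \<noteq> oplusn r a q"
proof -
  obtain d where q: "q = Suc p + d"
    using assms(2) less_iff_Suc_add by auto
  let ?b = "oplusn r a p"
  have b: "?b \<in> Field r"
    using oplusn_in_Field[OF assms(1)] .
  have "oplusn r a q = oplusn r (osucc r ?b) d"
    by (simp only: q oplusn_oplusn[symmetric] oplusn_Suc)
  then have b_q: "(osucc r ?b, oplusn r a q) \<in> r"
    using oplusn_above[OF osucc(1)[OF b], of d] by simp
  then show "(?b, oplusn r a q) \<in> r"
    using osucc(2)[OF b] r_trans by blast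
  show "?b \<noteq> oplusn r a q"
  proof
    assume "?b = oplusn r a q"
    then show False
      using b_q osucc(2,3)[OF b] r_antisym by metis
  qed
qed

lemma inj_oplusn: "a \<in> Field r \<Longrightarrow> inj (oplusn r a)"
  using oplusn_strict(2) by (metis linorder_injI)

lemma oplusn_interval:
  "x \<in> Field r \<Longrightarrow> (x, y) \<in> r \<Longrightarrow> (y, oplusn r x p) \<in> r \<Longrightarrow> \<exists>j\<le>p. y = oplusn r x j"
proof (induction p arbitrary: x)
  case 0
  then show ?case
    using r_antisym by auto
next
  case (Suc p)
  show ?case
  proof (cases "y = x")
    case True
    then show ?thesis
      by (intro exI[of _ 0]) simp
  next
    case False
    have "(osucc r x, y) \<in> r"
      using osucc_least[OF Suc.prems(1,2)] False by blast
    moreover have "(y, oplusn r (osucc r x) p) \<in> r"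
      using Suc.prems(3) oplusn_oplusn[of r x 1 p] by (simp add: oplusn_Suc)
    ultimately obtain j where "j \<le> p" "y = oplusn r (osucc r x) j"
      using Suc.IH[OF osucc(1)[OF Suc.prems(1)]] by blast
    then show ?thesis
      using oplusn_oplusn[of r x 1 j] by (intro exI[of _ "Suc j"]) (simp add: oplusn_Suc)
  qed
qed

text \<open>Every \<open>a\<close> is \<open>\<delta> + n\<close> with \<open>\<delta>\<close> a limit (or zero): \<open>\<delta>\<close> is the least element from which \<open>a\<close>
  is reached by finitely many successor steps.\<close>

definition lim_part :: "'i \<Rightarrow> 'i" where
  "lim_part a = wo_rel.minim r {d \<in> Field r. \<exists>n. oplusn r d n = a}"

definition nat_part :: "'i \<Rightarrow> nat" where
  "nat_part a = (SOME n. oplusn r (lim_part a) n = a)"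

lemma
  assumes "a \<in> Field r"
  shows lim_part_in_Field: "lim_part a \<in> Field r"
    and oplusn_lim_part_nat_part: "oplusn r (lim_part a) (nat_part a) = a"
    and lim_part_least: "\<And>d n. d \<in> Field r \<Longrightarrow> oplusn r d n = a \<Longrightarrow> (lim_part a, d) \<in> r"
proof -
  let ?D = "{d \<in> Field r. \<exists>n. oplusn r d n = a}"
  have sub: "?D \<subseteq> Field r"
    by blast
  have "a \<in> ?D"
    using assms by (intro CollectI conjI exI[of _ 0]) simp_all
  then have "?D \<noteq> {}"
    by blast
  then have "lim_part a \<in> ?D"
    unfolding lim_part_def by (rule wo_rel.minim_in[OF wo_rel sub])
  then show "lim_part a \<in> Field r" and "oplusn r (lim_part a) (nat_part a) = a"
    unfolding nat_part_def by (auto intro: someI_ex)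
  show "(lim_part a, d) \<in> r" if "d \<in> Field r" "oplusn r d n = a" for d n
    unfolding lim_part_def using that by (intro wo_rel.minim_least[OF wo_rel sub]) blast
qed

lemma lim_part_oplusn:
  assumes a: "a \<in> Field r"
  shows "lim_part (oplusn r a i) = lim_part a" and "nat_part (oplusn r a i) = nat_part a + i"
proof -
  let ?a' = "oplusn r a i" and ?d = "lim_part a"
  have a': "?a' \<in> Field r"
    using oplusn_in_Field[OF a] .
  have d: "?d \<in> Field r" "oplusn r ?d (nat_part a) = a"
    using lim_part_in_Field[OF a] oplusn_lim_part_nat_part[OF a] .
  have d': "lim_part ?a' \<in> Field r" "oplusn r (lim_part ?a') (nat_part ?a') = ?a'"
    using lim_part_in_Field[OF a'] oplusn_lim_part_nat_part[OF a'] .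
  have d_a': "oplusn r ?d (nat_part a + i) = ?a'"
    using oplusn_oplusn[of r ?d "nat_part a" i] d(2) by simp
  then have le: "(lim_part ?a', ?d) \<in> r"
    using lim_part_least[OF a' d(1)] by blast
  have "(?d, a) \<in> r"
    using oplusn_above[OF d(1), of "nat_part a"] d(2) by simp
  then have "(?d, ?a') \<in> r"
    using oplusn_above[OF a, of i] by (rule r_trans)
  then obtain j where j: "?d = oplusn r (lim_part ?a') j"
    using oplusn_interval[OF d'(1) le, of "nat_part ?a'"] d'(2) by auto
  then have "oplusn r (lim_part ?a') (j + nat_part a) = a"
    using oplusn_oplusn[of r "lim_part ?a'" j "nat_part a"] d(2) by simp
  then have "(?d, lim_part ?a') \<in> r"
    using lim_part_least[OF a d'(1)] by blast
  then show eq: "lim_part ?a' = ?d"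
    using le r_antisym by blast
  have "oplusn r ?d (nat_part ?a') = oplusn r ?d (nat_part a + i)"
    using d'(2) eq d_a' by simp
  then show "nat_part ?a' = nat_part a + i"
    using inj_oplusn[OF d(1)] by (simp add: inj_eq)
qed

lemma AFP_seq_of_blocks:
  assumes mono: "\<And>d. d \<in> lim_part ` Field r \<Longrightarrow> AFP_mono_seq G c k (B d)"
    and disj: "disjoint_family_on (\<lambda>d. range (B d)) (lim_part ` Field r)"
  shows "\<exists>g. g \<in> Field r \<rightarrow> carrier G \<and> inj_on g (Field r) \<and> (\<exists>k. \<forall>x\<in>AFP G r g. c x = k)"
proof -
  define g where "g a = B (lim_part a) (nat_part a)" for a
  have B: "AFP_mono_seq G c k (B (lim_part a))" if "a \<in> Field r" for a
    using mono that by blast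
  have "g \<in> Field r \<rightarrow> carrier G"
  proof (rule Pi_I)
    fix a assume "a \<in> Field r"
    then have "range (B (lim_part a)) \<subseteq> carrier G"
      using B by (simp add: AFP_mono_seq_def)
    then show "g a \<in> carrier G"
      unfolding g_def by blast
  qed
  moreover have "inj_on g (Field r)"
  proof (rule inj_onI)
    fix a a' assume a: "a \<in> Field r" and a': "a' \<in> Field r" and eq: "g a = g a'"
    have lim: "lim_part a = lim_part a'"
    proof (rule ccontr)
      assume ne: "lim_part a \<noteq> lim_part a'"
      have "lim_part a \<in> lim_part ` Field r" "lim_part a' \<in> lim_part ` Field r"
        using a a' by simp_all
      then have disjoint: "range (B (lim_part a)) \<inter> range (B (lim_part a')) = {}"
        using disj ne unfolding disjoint_family_on_def by blast
      have "g a' \<in> range (B (lim_part a'))"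
        unfolding g_def by simp
      then have "g a \<in> range (B (lim_part a'))"
        by (simp only: eq)
      moreover have "g a \<in> range (B (lim_part a))"
        unfolding g_def by simp
      ultimately show False
        using disjoint by (metis IntI empty_iff)
    qed
    have "inj (B (lim_part a))"
      using B[OF a] by (simp add: AFP_mono_seq_def)
    moreover have "B (lim_part a) (nat_part a) = B (lim_part a) (nat_part a')"
      using eq lim by (simp add: g_def)
    ultimately have "nat_part a = nat_part a'"
      by (simp add: inj_eq)
    have "a = oplusn r (lim_part a) (nat_part a)"
      using oplusn_lim_part_nat_part[OF a] by simp
    also have "\<dots> = oplusn r (lim_part a') (nat_part a')"
      by (simp only: lim \<open>nat_part a = nat_part a'\<close>)
    also have "\<dots> = a'"
      using oplusn_lim_part_nat_part[OF a'] .
    finally show "a = a'" .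
  qed
  moreover have "\<forall>x\<in>AFP G r g. c x = k"
  proof
    fix x assume "x \<in> AFP G r g"
    then obtain a n where x: "x = adj_prod G r g a n" and "indices_below r a n"
      unfolding AFP_def by blast
    then have a: "a \<in> Field r"
      by (simp add: indices_below_def)
    have "adj_prod G r g a n = seq_prod G (\<lambda>i. B (lim_part a) (nat_part a + i)) n"
      unfolding adj_prod_eq_seq_prod g_def using lim_part_oplusn[OF a] by simp
    then show "c x = k"
      using B[OF a] x unfolding AFP_mono_seq_def by simp
  qed
  ultimately show ?thesis
    by blast
qed

lemma lim_part_natLeq:
  assumes "r =o natLeq" and a: "a \<in> Field r"
  shows "lim_part a = wo_rel.minim r (Field r)"
proof -
  define z where "z = wo_rel.minim r (Field r)"
  have "Field r \<noteq> {}"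
    using infinite_Field by auto
  then have z: "z \<in> Field r" "\<And>x. x \<in> Field r \<Longrightarrow> (z, x) \<in> r"
    unfolding z_def using wo_rel.minim_in[OF wo_rel] wo_rel.minim_least[OF wo_rel] by auto
  have "|underS r a| <o natLeq"
    using card_of_underS[OF Card_order a] assms(1) ordLess_ordIso_trans by blast
  then have "finite (underS r a)"
    using infinite_iff_natLeq_ordLeq not_ordLess_ordLeq by blast
  moreover have "infinite (range (oplusn r z))"
    using range_inj_infinite[OF inj_oplusn[OF z(1)]] .
  ultimately obtain p where "oplusn r z p \<notin> underS r a"
    by (metis finite_subset image_subsetI)
  then have "(a, oplusn r z p) \<in> r"
    using r_total[OF a oplusn_in_Field[OF z(1)]] r_refl[OF a] unfolding underS_def by auto
  then obtain j where "a = oplusn r z j"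
    using oplusn_interval[OF z(1) z(2)[OF a]] by blast
  then have "(lim_part a, z) \<in> r"
    using lim_part_least[OF a z(1)] by simp
  then show ?thesis
    using z(2)[OF lim_part_in_Field[OF a]] r_antisym unfolding z_def by blast
qed

end

section \<open>The arrow relation\<close>

lemma AFP_arrow_infinite_colours:
  assumes r: "Card_order r" "infinite (Field r)" "r \<le>o cardSuc |Pow K|"
    and G: "group G" "|Pow K| <o |carrier G|" and K: "infinite K"
  shows "AFP_arrow G r K"
  unfolding AFP_arrow_def
proof
  fix c assume c: "c \<in> carrier G \<rightarrow> K"
  interpret group G
    by (fact G(1))
  interpret infinite_card_order r
    using r by unfold_locales
  obtain k M where M: "|Pow K| <o |M|" "\<And>b. b \<in> M \<Longrightarrow> AFP_mono_seq G c k b"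
    and disj: "disjoint_family_on range M"
    by (rule large_disjoint_family_of_AFP_mono_seqs[OF K c G(2)]) (rule that)
  have "|lim_part ` Field r| \<le>o r"
    using card_of_image card_of_Field_ordIso[OF r(1)] ordLeq_ordIso_trans by blast
  also have "r \<le>o cardSuc |Pow K|"
    by (fact r(3))
  also have "cardSuc |Pow K| \<le>o |M|"
    using cardSuc_least[OF card_of_Card_order card_of_Card_order M(1)] .
  finally obtain e where e: "inj_on e (lim_part ` Field r)" "e ` lim_part ` Field r \<subseteq> M"
    unfolding card_of_ordLeq[symmetric] by blast
  show "\<exists>g. g \<in> Field r \<rightarrow> carrier G \<and> inj_on g (Field r) \<and> (\<exists>k. \<forall>x\<in>AFP G r g. c x = k)"
  proof (rule AFP_seq_of_blocks)
    show "AFP_mono_seq G c k (e d)" if "d \<in> lim_part ` Field r" for d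
      using M(2) e(2) that by blast
    show "disjoint_family_on (\<lambda>d. range (e d)) (lim_part ` Field r)"
      using disj e unfolding disjoint_family_on_def inj_on_def by blast
  qed
qed

lemma AFP_arrow_natLeq:
  assumes r: "Card_order r" "r =o natLeq"
    and G: "group G" "infinite (carrier G)" and K: "finite K"
  shows "AFP_arrow G r K"
  unfolding AFP_arrow_def
proof
  fix c assume c: "c \<in> carrier G \<rightarrow> K"
  interpret group G
    by (fact G(1))
  have "infinite (Field r)"
    using card_of_Field_ordIso[OF r(1)] ordIso_imp_ordLeq[OF ordIso_symmetric[OF r(2)]]
    by (rule infinite_if_card_of_ordIso)
  then interpret infinite_card_order r
    using r(1) by unfold_locales
  obtain k b where b: "AFP_mono_seq G c k b"
    by (rule AFP_mono_seq_finite_colours[OF K c G(2)])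
  show "\<exists>g. g \<in> Field r \<rightarrow> carrier G \<and> inj_on g (Field r) \<and> (\<exists>k. \<forall>x\<in>AFP G r g. c x = k)"
  proof (rule AFP_seq_of_blocks)
    show "AFP_mono_seq G c k b" if "d \<in> lim_part ` Field r" for d
      by (fact b)
    show "disjoint_family_on (\<lambda>d. range b) (lim_part ` Field r)"
      using lim_part_natLeq[OF r(2)] unfolding disjoint_family_on_def by auto
  qed
qed

lemma natLeq_ordLeq_cardSuc_Pow:
  assumes "infinite K"
  shows "natLeq \<le>o cardSuc |Pow K|"
proof -
  have "infinite (Pow K)"
    using assms by simp
  then have "natLeq \<le>o |Pow K|"
    using infinite_iff_natLeq_ordLeq by blast
  then show ?thesis
    using cardSuc_greater[OF card_of_Card_order] ordLeq_ordLess_trans ordLess_imp_ordLeq by blast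
qed

lemma is_lambda_of_infinite:
  assumes "is_lambda_of r K" and "infinite K"
  shows "r =o cardSuc |Pow K|"
  using assms natLeq_ordLeq_cardSuc_Pow unfolding is_lambda_of_def by blast

lemma is_lambda_of_finite:
  assumes "is_lambda_of r K" and "finite K"
  shows "r =o natLeq"
proof -
  have "finite (Field (cardSuc |Pow K| ))"
    using assms(2) by (simp add: card_of_cardSuc_finite)
  then have "cardSuc |Pow K| <o natLeq"
    using finite_ordLess_infinite[OF cardSuc_Well_order[OF card_of_Card_order] natLeq_Well_order]
    by (simp add: Field_natLeq)
  then show ?thesis
    using assms(1) unfolding is_lambda_of_def by blast
qed

theorem mainTheorem2:
  fixes K :: "'k set" and r :: "'i rel" and G :: "('a, 'b) monoid_scheme"
  assumes "Card_order r"
    and "is_lambda_of r K"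
    and "group G"
    and "(card_of (carrier G), r) \<in> ordIso"
  shows "AFP_arrow G r K"
proof (cases "finite K")
  case True
  then have r: "r =o natLeq"
    using is_lambda_of_finite assms(2) by blast
  have "infinite (carrier G)"
    using assms(4) ordIso_imp_ordLeq[OF ordIso_symmetric[OF r]] by (rule infinite_if_card_of_ordIso)
  then show ?thesis
    using AFP_arrow_natLeq[OF assms(1) r assms(3)] True by blast
next
  case False
  then have r: "r =o cardSuc |Pow K|"
    using is_lambda_of_infinite assms(2) by blast
  have "infinite (Field r)"
    using card_of_Field_ordIso[OF assms(1)]
      ordLeq_ordIso_trans[OF natLeq_ordLeq_cardSuc_Pow[OF False] ordIso_symmetric[OF r]]
    by (rule infinite_if_card_of_ordIso)
  moreover have "|Pow K| <o |carrier G|"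
    using cardSuc_greater[OF card_of_Card_order]
      ordIso_transitive[OF ordIso_symmetric[OF r] ordIso_symmetric[OF assms(4)]]
    by (rule ordLess_ordIso_trans)
  ultimately show ?thesis
    using AFP_arrow_infinite_colours[OF assms(1) _ ordIso_imp_ordLeq[OF r] assms(3) _ False]
    by blast
qed

end
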